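(* Consider the ring $S=\mathbb{F}_{p^m}[x]/\langle x^{4p^s}-\alpha\rangle$. Then: (a) $S$ has exactly two maximal ideals, $\langle x^2+\gamma x+\frac{\gamma^2}{2}\rangle$ and $\langle x^2-\gamma x+\frac{\gamma^2}{2}\rangle$; (b) the ideals of $S$ are exactly $\left\langle \left(x^2+\gamma x+\frac{\gamma^2}{2}\right)^i\left(x^2-\gamma x+\frac{\gamma^2}{2}\right)^j\right\rangle$ with $0\le i,j\le p^s$, and such an ideal has $p^{m(4p^s-2i-2j)}$ elements; (c) the set of nilpotent elements of $S$ is $\langle x^4-\alpha_0\rangle$; (d) the set of non-units of $S$ is $\langle x^2+\gamma x+\frac{\gamma^2}{2}\rangle\cup\langle x^2-\gamma x+\frac{\gamma^2}{2}\rangle$.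
   Context: Let $p$ be an odd prime and $m,s$ positive integers with $p^m\equiv 3\pmod 4$; $\mathbb{F}_{p^m}$ is the field with $p^m$ elements. Fix $\alpha\in\mathbb{F}_{p^m}\setminus\{0\}$ that is not a square in $\mathbb{F}_{p^m}$, let $\alpha_0\in\mathbb{F}_{p^m}$ satisfy $\alpha_0^{p^s}=\alpha$, and let $\gamma\in\mathbb{F}_{p^m}$ satisfy $\gamma^4+4\alpha_0=0$. *)

theory Defs
  imports "HOL-Algebra.Ideal" "HOL-Computational_Algebra.Polynomial"
begin

text \<open>The residue ring k[x]/<f>, represented concretely by the remainders
  modulo f (polynomials of degree < degree f), with multiplication modulo f.\<close>
definition quot_poly_ring :: "'a::field poly \<Rightarrow> 'a poly ring" where
  "quot_poly_ring f = \<lparr>carrier = {g. degree g < degree f},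
      monoid.mult = (\<lambda>a b. (a * b) mod f), one = 1 mod f,
      zero = 0, add = (+)\<rparr>"

definition nilpotents :: "('a, 'b) ring_scheme \<Rightarrow> 'a set" where
  "nilpotents R = {a \<in> carrier R. \<exists>n::nat. a [^]\<^bsub>R\<^esub> n = \<zero>\<^bsub>R\<^esub>}"

end

theory Submission
  imports Defs "HOL-Computational_Algebra.Polynomial_Factorial"
begin

text \<open>
  Since the characteristic is \<open>p\<close> and \<open>p\<^sup>s\<close> is odd, \<open>x\<^bsup>4p\<^sup>s\<^esup> - \<alpha> = (x\<^sup>4 - \<alpha>\<^sub>0)\<^bsup>p\<^sup>s\<^esup>\<close>,
  and \<open>x\<^sup>4 - \<alpha>\<^sub>0 = g\<^sub>1 g\<^sub>2\<close> for the two quadratics of the statement. A root of \<open>g\<^sub>1\<close> or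
  \<open>g\<^sub>2\<close> would yield a square root of \<open>-1\<close>, which \<open>\<bbbF>\<^sub>q\<close> lacks for \<open>q \<equiv> 3 (mod 4)\<close>;
  hence \<open>g\<^sub>1, g\<^sub>2\<close> are distinct primes. In \<open>k[x]/\<langle>f\<rangle>\<close> every ideal consists of the residues
  divisible by some divisor \<open>d\<close> of \<open>f\<close> and has \<open>|k|\<^bsup>deg f - deg d\<^esup>\<close> elements; the divisors of
  \<open>g\<^sub>1\<^sup>n g\<^sub>2\<^sup>n\<close> are, up to units, the \<open>g\<^sub>1\<^sup>i g\<^sub>2\<^sup>j\<close>. Maximal ideals, units (residues coprime
  to \<open>f\<close>) and nilpotents (residues divisible by \<open>g\<^sub>1 g\<^sub>2\<close>) are read off from this.
\<close>

section \<open>Residue rings of polynomials\<close>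

text \<open>For a divisor \<open>d\<close> of \<open>f\<close> this is the ideal \<open>\<langle>d\<rangle>\<close> of \<open>k[x]/\<langle>f\<rangle>\<close>.\<close>

definition poly_multiples :: "'a::field poly \<Rightarrow> 'a poly \<Rightarrow> 'a poly set" where
  "poly_multiples f d = {g. degree g < degree f \<and> d dvd g}"

lemma poly_multiples_antimono: "d dvd e \<Longrightarrow> poly_multiples f e \<subseteq> poly_multiples f d"
  by (auto simp: poly_multiples_def intro: dvd_trans)

lemma poly_multiples_mult_unit: "is_unit u \<Longrightarrow> poly_multiples f (u * d) = poly_multiples f d"
  by (simp add: poly_multiples_def mult_unit_dvd_iff')

context
  fixes f :: "'a::field poly"
  assumes degree_f: "degree f > 0"
begin

lemma quot_poly_ring_simps:
  "carrier (quot_poly_ring f) = {g. degree g < degree f}"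
  "a \<otimes>\<^bsub>quot_poly_ring f\<^esub> b = (a * b) mod f"
  "\<one>\<^bsub>quot_poly_ring f\<^esub> = 1"
  "\<zero>\<^bsub>quot_poly_ring f\<^esub> = 0"
  "a \<oplus>\<^bsub>quot_poly_ring f\<^esub> b = a + b"
  using degree_f by (auto simp: quot_poly_ring_def mod_poly_less)

lemma mod_in_carrier_quot_poly_ring: "g mod f \<in> carrier (quot_poly_ring f)"
proof -
  have "f \<noteq> 0" using degree_f by auto
  then show ?thesis using degree_mod_less'[of f g] degree_f
    by (cases "g mod f = 0") (auto simp: quot_poly_ring_simps simp del: mod_eq_0_iff_dvd)
qed

lemma mod_eq_self_in_carrier: "g \<in> carrier (quot_poly_ring f) \<Longrightarrow> g mod f = g"
  by (simp add: quot_poly_ring_simps mod_poly_less)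

lemma cring_quot_poly_ring: "cring (quot_poly_ring f)"
proof (rule cringI)
  show "abelian_group (quot_poly_ring f)"
  proof (rule abelian_groupI)
    fix x y assume "x \<in> carrier (quot_poly_ring f)" "y \<in> carrier (quot_poly_ring f)"
    then show "x \<oplus>\<^bsub>quot_poly_ring f\<^esub> y \<in> carrier (quot_poly_ring f)"
      by (simp add: quot_poly_ring_simps degree_add_less)
    show "\<exists>z\<in>carrier (quot_poly_ring f). z \<oplus>\<^bsub>quot_poly_ring f\<^esub> x = \<zero>\<^bsub>quot_poly_ring f\<^esub>"
      using \<open>x \<in> _\<close> by (intro bexI[of _ "- x"]) (auto simp: quot_poly_ring_simps)
  qed (use degree_f in \<open>auto simp: quot_poly_ring_simps\<close>)
  show "comm_monoid (quot_poly_ring f)"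
  proof (rule comm_monoidI)
    fix x y z
    show "x \<otimes>\<^bsub>quot_poly_ring f\<^esub> y \<otimes>\<^bsub>quot_poly_ring f\<^esub> z =
          x \<otimes>\<^bsub>quot_poly_ring f\<^esub> (y \<otimes>\<^bsub>quot_poly_ring f\<^esub> z)"
      by (simp add: quot_poly_ring_simps mod_mult_left_eq mod_mult_right_eq mult.assoc)
    assume "x \<in> carrier (quot_poly_ring f)"
    then show "\<one>\<^bsub>quot_poly_ring f\<^esub> \<otimes>\<^bsub>quot_poly_ring f\<^esub> x = x"
      by (simp add: quot_poly_ring_simps mod_poly_less)
  qed (use degree_f mod_in_carrier_quot_poly_ring in \<open>auto simp: quot_poly_ring_simps mult.commute\<close>)
qed (simp add: quot_poly_ring_simps distrib_right poly_mod_add_left)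

interpretation S: cring "quot_poly_ring f"
  by (rule cring_quot_poly_ring)

lemma a_inv_quot_poly_ring: "a \<in> carrier (quot_poly_ring f) \<Longrightarrow> \<ominus>\<^bsub>quot_poly_ring f\<^esub> a = - a"
  using S.minus_equality[of "- a" a] by (simp add: quot_poly_ring_simps)

lemma nat_pow_quot_poly_ring: "a [^]\<^bsub>quot_poly_ring f\<^esub> (n::nat) = a ^ n mod f"
proof (induction n)
  case (Suc n)
  then show ?case by (simp add: quot_poly_ring_simps) (metis mod_mult_left_eq mult.commute)
qed (simp add: quot_poly_ring_simps mod_poly_less degree_f)

lemma ideal_poly_multiples:
  assumes "d dvd f"
  shows "ideal (poly_multiples f d) (quot_poly_ring f)"
proof (rule idealI[OF S.ring_axioms])
  show "subgroup (poly_multiples f d) (add_monoid (quot_poly_ring f))"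
  proof (rule S.add.subgroupI)
    fix a b assume "a \<in> poly_multiples f d" "b \<in> poly_multiples f d"
    then show "\<ominus>\<^bsub>quot_poly_ring f\<^esub> a \<in> poly_multiples f d"
      and "a \<oplus>\<^bsub>quot_poly_ring f\<^esub> b \<in> poly_multiples f d"
      by (auto simp: poly_multiples_def quot_poly_ring_simps a_inv_quot_poly_ring degree_add_less)
  qed (use degree_f in \<open>auto simp: poly_multiples_def quot_poly_ring_simps intro: exI[of _ 0]\<close>)
  fix a x assume "a \<in> poly_multiples f d"
  then show "x \<otimes>\<^bsub>quot_poly_ring f\<^esub> a \<in> poly_multiples f d"
    and "a \<otimes>\<^bsub>quot_poly_ring f\<^esub> x \<in> poly_multiples f d"
    using assms mod_in_carrier_quot_poly_ring
    by (auto simp: poly_multiples_def quot_poly_ring_simps intro!: dvd_mod)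
qed

lemma genideal_eq_poly_multiples:
  assumes "e dvd f"
  shows "Idl\<^bsub>quot_poly_ring f\<^esub> {e mod f} = poly_multiples f e"
proof
  have "e mod f \<in> poly_multiples f e"
    using assms mod_in_carrier_quot_poly_ring by (auto simp: poly_multiples_def quot_poly_ring_simps)
  then show "Idl\<^bsub>quot_poly_ring f\<^esub> {e mod f} \<subseteq> poly_multiples f e"
    by (intro S.genideal_minimal ideal_poly_multiples assms) simp
  show "poly_multiples f e \<subseteq> Idl\<^bsub>quot_poly_ring f\<^esub> {e mod f}"
  proof
    fix g assume "g \<in> poly_multiples f e"
    then obtain k where g: "g = e * k" "degree g < degree f" by (auto simp: poly_multiples_def)
    have "(k mod f) \<otimes>\<^bsub>quot_poly_ring f\<^esub> (e mod f) \<in> Idl\<^bsub>quot_poly_ring f\<^esub> {e mod f}"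
      using mod_in_carrier_quot_poly_ring
      by (intro ideal.I_l_closed[OF S.genideal_ideal] S.genideal_self') auto
    moreover have "(k mod f) \<otimes>\<^bsub>quot_poly_ring f\<^esub> (e mod f) = g"
      using g by (simp add: quot_poly_ring_simps mod_mult_eq mult.commute mod_poly_less)
    ultimately show "g \<in> Idl\<^bsub>quot_poly_ring f\<^esub> {e mod f}" by simp
  qed
qed

lemma ideal_mod_diff_mult:
  assumes "ideal I (quot_poly_ring f)" "g mod f \<in> I" "h mod f \<in> I"
  shows "(g - r * h) mod f \<in> I"
proof -
  interpret I: ideal I "quot_poly_ring f" by fact
  have "(r mod f) \<otimes>\<^bsub>quot_poly_ring f\<^esub> (h mod f) \<in> I"
    using assms(3) mod_in_carrier_quot_poly_ring by (rule I.I_l_closed)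
  then have "(r * h) mod f \<in> I" by (simp add: quot_poly_ring_simps mod_mult_eq)
  then have "g mod f \<oplus>\<^bsub>quot_poly_ring f\<^esub> \<ominus>\<^bsub>quot_poly_ring f\<^esub> ((r * h) mod f) \<in> I"
    using assms(2) by (intro I.a_closed I.a_inv_closed)
  moreover have "\<ominus>\<^bsub>quot_poly_ring f\<^esub> ((r * h) mod f) = - ((r * h) mod f)"
    by (rule a_inv_quot_poly_ring[OF mod_in_carrier_quot_poly_ring])
  ultimately show ?thesis by (simp add: quot_poly_ring_simps poly_mod_diff_left)
qed

text \<open>The generator is a nonzero polynomial of least degree whose residue lies in the ideal.\<close>

lemma ideal_imp_eq_poly_multiples:
  assumes "ideal I (quot_poly_ring f)"
  obtains d where "d dvd f" "I = poly_multiples f d"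
proof -
  interpret I: ideal I "quot_poly_ring f" by fact
  define I' where "I' = {g. g mod f \<in> I}"
  have diff_mult_in_I': "g - r * h \<in> I'" if "g \<in> I'" "h \<in> I'" for g h r
    using ideal_mod_diff_mult[OF assms] that by (simp add: I'_def)
  have "0 \<in> I'" "f \<in> I'" using I.zero_closed by (simp_all add: I'_def quot_poly_ring_simps)
  moreover have "f \<noteq> 0" using degree_f by auto
  ultimately obtain d where d: "d \<in> I'" "d \<noteq> 0"
    and d_min: "\<And>g. g \<in> I' \<Longrightarrow> g \<noteq> 0 \<Longrightarrow> degree d \<le> degree g"
    using ex_has_least_nat[of "\<lambda>g. g \<in> I' \<and> g \<noteq> 0" f degree] by blast
  have dvd_I': "d dvd g" if "g \<in> I'" for g
  proof (rule ccontr)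
    assume "\<not> d dvd g"
    then have "g mod d \<noteq> 0" "degree (g mod d) < degree d"
      using degree_mod_less'[OF d(2)] by auto
    moreover have "g mod d \<in> I'"
      using diff_mult_in_I'[OF that d(1), of "g div d"] by (simp add: minus_div_mult_eq_mod)
    ultimately show False using d_min by fastforce
  qed
  show thesis
  proof
    show "d dvd f" using dvd_I' \<open>f \<in> I'\<close> .
    show "I = poly_multiples f d"
    proof (intro equalityI subsetI)
      fix g assume "g \<in> I"
      then have "g \<in> carrier (quot_poly_ring f)" "g \<in> I'"
        using I.a_subset by (auto simp: I'_def mod_eq_self_in_carrier)
      then show "g \<in> poly_multiples f d"
        using dvd_I' by (auto simp: poly_multiples_def quot_poly_ring_simps)
    next
      fix g assume "g \<in> poly_multiples f d"
      then obtain k where g: "g = d * k" "degree g < degree f" by (auto simp: poly_multiples_def)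
      then have "0 - (- k) * d \<in> I'" by (intro diff_mult_in_I' \<open>0 \<in> I'\<close> d(1))
      then show "g \<in> I" using g by (simp add: I'_def mult.commute mod_poly_less)
    qed
  qed
qed

lemma poly_multiples_eq_carrier_iff:
  "poly_multiples f d = carrier (quot_poly_ring f) \<longleftrightarrow> is_unit d"
proof
  assume "poly_multiples f d = carrier (quot_poly_ring f)"
  moreover have "1 \<in> carrier (quot_poly_ring f)" using degree_f by (simp add: quot_poly_ring_simps)
  ultimately have "1 \<in> poly_multiples f d" by simp
  then show "is_unit d" by (simp add: poly_multiples_def)
next
  assume "is_unit d"
  then show "poly_multiples f d = carrier (quot_poly_ring f)"
    by (simp add: poly_multiples_def quot_poly_ring_simps unit_imp_dvd)
qed

lemma Units_quot_poly_ring: "Units (quot_poly_ring f) = {a \<in> carrier (quot_poly_ring f). coprime a f}"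
proof (intro equalityI subsetI CollectI conjI)
  fix a assume a: "a \<in> Units (quot_poly_ring f)"
  then show "a \<in> carrier (quot_poly_ring f)" by blast
  from a obtain b where "(b * a) mod f = 1 mod f"
    using degree_f by (auto simp: Units_def quot_poly_ring_simps mod_poly_less)
  then have "f dvd b * a - 1" by (simp add: mod_eq_dvd_iff)
  then show "coprime a f"
  proof (intro coprimeI)
    fix c assume "c dvd a" "c dvd f"
    then have "c dvd b * a" "c dvd b * a - 1" using \<open>f dvd b * a - 1\<close> dvd_trans by auto
    then have "c dvd b * a - (b * a - 1)" by (rule dvd_diff)
    then show "is_unit c" by simp
  qed
next
  fix a assume a: "a \<in> {a \<in> carrier (quot_poly_ring f). coprime a f}"
  have "ideal (Idl\<^bsub>quot_poly_ring f\<^esub> {a}) (quot_poly_ring f)" using a by (intro S.genideal_ideal) simp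
  then obtain d where d: "d dvd f" "Idl\<^bsub>quot_poly_ring f\<^esub> {a} = poly_multiples f d"
    by (rule ideal_imp_eq_poly_multiples)
  have "a \<in> poly_multiples f d" using S.genideal_self' a d(2) by auto
  then have "is_unit d" using a d(1) by (auto simp: poly_multiples_def coprime_def)
  then have "\<one>\<^bsub>quot_poly_ring f\<^esub> \<in> PIdl\<^bsub>quot_poly_ring f\<^esub> a"
    using a d(2) poly_multiples_eq_carrier_iff[of d] S.cgenideal_eq_genideal[of a] by auto
  then obtain b where "b \<in> carrier (quot_poly_ring f)" "b \<otimes>\<^bsub>quot_poly_ring f\<^esub> a = \<one>\<^bsub>quot_poly_ring f\<^esub>"
    by (auto simp: cgenideal_def)
  moreover have "a \<otimes>\<^bsub>quot_poly_ring f\<^esub> b = \<one>\<^bsub>quot_poly_ring f\<^esub>"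
    using calculation a S.m_comm[of a b] by simp
  ultimately show "a \<in> Units (quot_poly_ring f)" using a unfolding Units_def by blast
qed

lemma maximalideal_poly_multiples:
  assumes "irreducible q" "q dvd f" "degree q < degree f"
  shows "maximalideal (poly_multiples f q) (quot_poly_ring f)"
proof (rule maximalidealI)
  show "ideal (poly_multiples f q) (quot_poly_ring f)" by (rule ideal_poly_multiples[OF assms(2)])
  show "carrier (quot_poly_ring f) \<noteq> poly_multiples f q"
    using poly_multiples_eq_carrier_iff assms(1) by (metis irreducible_not_unit)
  fix J assume J: "ideal J (quot_poly_ring f)" "poly_multiples f q \<subseteq> J"
  obtain e where e: "e dvd f" "J = poly_multiples f e" using ideal_imp_eq_poly_multiples[OF J(1)] by blast
  have "e dvd q" using J(2) e(2) assms(3) by (auto simp: poly_multiples_def)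
  then consider "q dvd e" | "is_unit e" using irreducibleD'[OF assms(1)] by blast
  then show "J = poly_multiples f q \<or> J = carrier (quot_poly_ring f)"
  proof cases
    case 1
    then show ?thesis using J(2) e(2) poly_multiples_antimono by blast
  qed (use e poly_multiples_eq_carrier_iff in blast)
qed

end

lemma card_polys_coeff_vanishing:
  assumes "finite (UNIV :: 'a::zero set)"
  shows "card {k :: 'a poly. \<forall>i\<ge>n. coeff k i = 0} = card (UNIV :: 'a set) ^ n"
proof -
  have "bij_betw Poly {xs :: 'a list. length xs = n} {k. \<forall>i\<ge>n. coeff k i = 0}"
  proof (rule bij_betw_byWitness[where f' = "\<lambda>k. map (coeff k) [0..<n]"])
    show "\<forall>xs\<in>{xs. length xs = n}. map (coeff (Poly xs)) [0..<n] = xs"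
      by (auto intro!: nth_equalityI simp: nth_default_def)
    show "\<forall>k\<in>{k. \<forall>i\<ge>n. coeff k i = 0}. Poly (map (coeff k) [0..<n]) = k"
      by (auto intro!: poly_eqI simp: nth_default_def)
    show "Poly ` {xs. length xs = n} \<subseteq> {k. \<forall>i\<ge>n. coeff k i = 0}"
      by (auto simp: nth_default_def)
    show "(\<lambda>k. map (coeff k) [0..<n]) ` {k. \<forall>i\<ge>n. coeff k i = 0} \<subseteq> {xs. length xs = n}"
      by auto
  qed
  then have "card {k :: 'a poly. \<forall>i\<ge>n. coeff k i = 0} = card {xs :: 'a list. length xs = n}"
    by (simp add: bij_betw_same_card)
  also have "\<dots> = card (UNIV :: 'a set) ^ n" using card_lists_length_eq[OF assms, of n] by simp
  finally show ?thesis .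
qed

lemma card_poly_multiples:
  fixes f e :: "'a::field poly"
  assumes "finite (UNIV :: 'a set)" "e dvd f" "degree f > 0"
  shows "card (poly_multiples f e) = card (UNIV :: 'a set) ^ (degree f - degree e)"
proof -
  let ?N = "degree f - degree e"
  have "f \<noteq> 0" using assms(3) by auto
  then have "e \<noteq> 0" using assms(2) by auto
  have "degree e \<le> degree f" using assms(2) \<open>f \<noteq> 0\<close> by (rule dvd_imp_degree_le)
  have degree_iff: "degree (e * k) < degree f \<longleftrightarrow> (\<forall>i\<ge>?N. coeff k i = 0)" for k
  proof (cases "k = 0")
    case False
    have "(\<forall>i\<ge>?N. coeff k i = 0) \<longleftrightarrow> degree k < ?N"
    proof
      assume "\<forall>i\<ge>?N. coeff k i = 0"
      then show "degree k < ?N" using False leading_coeff_0_iff not_le by blast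
    qed (auto intro: coeff_eq_0)
    moreover have "degree (e * k) = degree e + degree k" using \<open>e \<noteq> 0\<close> False by (rule degree_mult_eq)
    ultimately show ?thesis by (simp add: less_diff_conv add.commute)
  qed (simp add: assms(3))
  have "poly_multiples f e = (\<lambda>k. e * k) ` {k. \<forall>i\<ge>?N. coeff k i = 0}"
    using degree_iff by (fastforce simp: poly_multiples_def elim!: dvdE)
  moreover have "inj_on (\<lambda>k. e * k) {k. \<forall>i\<ge>?N. coeff k i = 0}"
    using \<open>e \<noteq> 0\<close> by (auto intro: inj_onI)
  ultimately show ?thesis by (simp add: card_image card_polys_coeff_vanishing[OF assms(1)])
qed

section \<open>Quotients by a product of two prime powers\<close>

lemma dvd_prime_elem_power_mult:
  fixes q :: "'a::idom"
  assumes "prime_elem q" "d dvd q ^ a * x"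
  shows "\<exists>i\<le>a. \<exists>e. d = q ^ i * e \<and> e dvd x"
  using assms(2)
proof (induction a arbitrary: d)
  case 0
  then show ?case by (intro exI[of _ 0] conjI exI[of _ d]) simp_all
next
  case (Suc a)
  have "q \<noteq> 0" using assms(1) by (rule prime_elem_not_zeroI)
  obtain c where "q ^ Suc a * x = d * c" using Suc.prems by (rule dvdE)
  then have c: "q * (q ^ a * x) = d * c" by (simp only: power_Suc mult.assoc)
  then have "q dvd d * c" by (metis dvd_triv_left)
  then consider "q dvd d" | "q dvd c" using prime_elem_dvd_multD[OF assms(1)] by blast
  then show ?case
  proof cases
    case 1
    then obtain d' where d': "d = q * d'" by (rule dvdE)
    with c have "q * (q ^ a * x) = q * (d' * c)" by (simp only: mult.assoc)
    with \<open>q \<noteq> 0\<close> have "q ^ a * x = d' * c" by (rule mult_left_cancel[THEN iffD1])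
    then have "d' dvd q ^ a * x" by (rule dvdI)
    with Suc.IH obtain i e where "i \<le> a" "d' = q ^ i * e" "e dvd x" by blast
    then show ?thesis by (intro exI[of _ "Suc i"] conjI exI[of _ e]) (simp_all add: d' mult.assoc)
  next
    case 2
    then obtain c' where "c = q * c'" by (rule dvdE)
    with c have "q * (q ^ a * x) = q * (d * c')" by (simp only: mult.left_commute)
    with \<open>q \<noteq> 0\<close> have "q ^ a * x = d * c'" by (rule mult_left_cancel[THEN iffD1])
    then have "d dvd q ^ a * x" by (rule dvdI)
    with Suc.IH obtain i e where "i \<le> a" "d = q ^ i * e" "e dvd x" by blast
    then show ?thesis by (intro exI[of _ i] conjI exI[of _ e]) simp_all
  qed
qed

locale two_prime_power_quotient =
  fixes f q1 q2 :: "'a::field poly" and n :: nat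
  assumes f_eq: "f = (q1 * q2) ^ n"
    and irreducible_q1: "irreducible q1" and irreducible_q2: "irreducible q2"
    and not_dvd_q1_q2: "\<not> q1 dvd q2" and n_pos: "n > 0"
begin

abbreviation S :: "'a poly ring" where "S \<equiv> quot_poly_ring f"

lemma prime_elem_q1: "prime_elem q1" and prime_elem_q2: "prime_elem q2"
  using irreducible_q1 irreducible_q2 by (simp_all add: field_poly_irreducible_imp_prime)

lemma not_dvd_q2_q1: "\<not> q2 dvd q1"
  using irreducibleD'[OF irreducible_q1] irreducible_not_unit[OF irreducible_q2] not_dvd_q1_q2 by blast

lemma degree_q1_pos: "degree q1 > 0" and degree_q2_pos: "degree q2 > 0"
  using irreducible_q1 irreducible_q2
  by (auto simp: irreducible_def is_unit_iff_degree)

lemma degree_f: "degree f = n * (degree q1 + degree q2)"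
proof -
  have "q1 \<noteq> 0" "q2 \<noteq> 0" using irreducible_q1 irreducible_q2 by (simp_all add: irreducible_def)
  then show ?thesis by (simp add: f_eq degree_power_eq degree_mult_eq)
qed

lemma degree_q1_less: "degree q1 < degree f" and degree_q2_less: "degree q2 < degree f"
proof -
  have "degree q1 + degree q2 \<le> degree f" using n_pos by (simp add: degree_f)
  then show "degree q1 < degree f" "degree q2 < degree f" using degree_q1_pos degree_q2_pos by simp_all
qed

lemma degree_f_pos: "degree f > 0"
  using degree_q1_less by simp

lemma power_product_dvd_f: "i \<le> n \<Longrightarrow> j \<le> n \<Longrightarrow> q1 ^ i * q2 ^ j dvd f"
  by (simp add: f_eq power_mult_distrib mult_dvd_mono le_imp_power_dvd)

lemma dvd_fE:
  assumes "d dvd f"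
  obtains u i j where "is_unit u" "i \<le> n" "j \<le> n" "d = u * (q1 ^ i * q2 ^ j)"
proof -
  have "d dvd q1 ^ n * (q2 ^ n * 1)" using assms by (simp add: f_eq power_mult_distrib)
  then obtain i e where "i \<le> n" "d = q1 ^ i * e" "e dvd q2 ^ n * 1"
    using dvd_prime_elem_power_mult[OF prime_elem_q1] by blast
  moreover obtain j u where "j \<le> n" "e = q2 ^ j * u" "u dvd 1"
    using dvd_prime_elem_power_mult[OF prime_elem_q2 \<open>e dvd q2 ^ n * 1\<close>] by blast
  ultimately show thesis by (intro that[of u i j]) (simp_all add: mult_ac)
qed

lemmas quot_poly_ring_simps_f = quot_poly_ring_simps[OF degree_f_pos]

lemma q1_dvd_f: "q1 dvd f" and q2_dvd_f: "q2 dvd f"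
  using power_product_dvd_f[of 1 0] power_product_dvd_f[of 0 1] n_pos by simp_all

lemma genideal_q1: "Idl\<^bsub>S\<^esub> {q1} = poly_multiples f q1"
  and genideal_q2: "Idl\<^bsub>S\<^esub> {q2} = poly_multiples f q2"
  using genideal_eq_poly_multiples[OF degree_f_pos q1_dvd_f] genideal_eq_poly_multiples[OF degree_f_pos q2_dvd_f]
    degree_q1_less degree_q2_less
  by (simp_all add: mod_poly_less)

lemma genideal_power_product:
  assumes "i \<le> n" "j \<le> n"
  shows "Idl\<^bsub>S\<^esub> {q1 [^]\<^bsub>S\<^esub> i \<otimes>\<^bsub>S\<^esub> q2 [^]\<^bsub>S\<^esub> j} = poly_multiples f (q1 ^ i * q2 ^ j)"
proof -
  have "q1 [^]\<^bsub>S\<^esub> i \<otimes>\<^bsub>S\<^esub> q2 [^]\<^bsub>S\<^esub> j = (q1 ^ i * q2 ^ j) mod f"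
    by (simp add: nat_pow_quot_poly_ring[OF degree_f_pos] quot_poly_ring_simps_f mod_mult_eq)
  then show ?thesis
    using genideal_eq_poly_multiples[OF degree_f_pos power_product_dvd_f[OF assms]] by simp
qed

lemma ideal_quotE:
  assumes "ideal I S"
  obtains i j where "i \<le> n" "j \<le> n" "I = poly_multiples f (q1 ^ i * q2 ^ j)"
proof -
  obtain d where "d dvd f" "I = poly_multiples f d"
    using ideal_imp_eq_poly_multiples[OF degree_f_pos assms] by blast
  moreover obtain u i j where "is_unit u" "i \<le> n" "j \<le> n" "d = u * (q1 ^ i * q2 ^ j)"
    using \<open>d dvd f\<close> by (rule dvd_fE)
  ultimately show thesis using that poly_multiples_mult_unit by metis
qed

lemma ideals_quot:
  "{I. ideal I S} = {Idl\<^bsub>S\<^esub> {q1 [^]\<^bsub>S\<^esub> i \<otimes>\<^bsub>S\<^esub> q2 [^]\<^bsub>S\<^esub> j} | i j. i \<le> n \<and> j \<le> n}"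
proof (intro equalityI subsetI)
  fix I assume "I \<in> {I. ideal I S}"
  then obtain i j where "i \<le> n" "j \<le> n" "I = poly_multiples f (q1 ^ i * q2 ^ j)"
    by (blast elim: ideal_quotE)
  then show "I \<in> {Idl\<^bsub>S\<^esub> {q1 [^]\<^bsub>S\<^esub> i \<otimes>\<^bsub>S\<^esub> q2 [^]\<^bsub>S\<^esub> j} | i j. i \<le> n \<and> j \<le> n}"
    using genideal_power_product by blast
next
  fix I assume "I \<in> {Idl\<^bsub>S\<^esub> {q1 [^]\<^bsub>S\<^esub> i \<otimes>\<^bsub>S\<^esub> q2 [^]\<^bsub>S\<^esub> j} | i j. i \<le> n \<and> j \<le> n}"
  then obtain i j where "i \<le> n" "j \<le> n" "I = poly_multiples f (q1 ^ i * q2 ^ j)"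
    using genideal_power_product by blast
  then show "I \<in> {I. ideal I S}"
    using ideal_poly_multiples[OF degree_f_pos power_product_dvd_f] by blast
qed

lemma genideal_q1_neq_q2: "Idl\<^bsub>S\<^esub> {q1} \<noteq> Idl\<^bsub>S\<^esub> {q2}"
proof -
  have "q1 \<in> poly_multiples f q1" "q1 \<notin> poly_multiples f q2"
    using degree_q1_less not_dvd_q2_q1 by (simp_all add: poly_multiples_def)
  then show ?thesis by (auto simp: genideal_q1 genideal_q2)
qed

lemma maximalideals_quot: "{I. maximalideal I S} = {Idl\<^bsub>S\<^esub> {q1}, Idl\<^bsub>S\<^esub> {q2}}"
proof (intro equalityI subsetI)
  fix I assume "I \<in> {I. maximalideal I S}"
  then interpret I: maximalideal I S by simp
  obtain i j where ij: "i \<le> n" "j \<le> n" "I = poly_multiples f (q1 ^ i * q2 ^ j)"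
    using I.is_ideal by (rule ideal_quotE)
  have contained: "I = poly_multiples f q" if "q dvd q1 ^ i * q2 ^ j" "irreducible q" "q dvd f" for q
  proof -
    have "I \<subseteq> poly_multiples f q" using ij(3) that(1) by (simp add: poly_multiples_antimono)
    moreover have "ideal (poly_multiples f q) S" using ideal_poly_multiples[OF degree_f_pos that(3)] .
    moreover have "poly_multiples f q \<noteq> carrier S"
      using poly_multiples_eq_carrier_iff[OF degree_f_pos] irreducible_not_unit[OF that(2)] by blast
    moreover have "poly_multiples f q \<subseteq> carrier S" by (auto simp: poly_multiples_def quot_poly_ring_simps_f)
    ultimately show ?thesis using I.I_maximal by blast
  qed
  consider "i > 0" | "j > 0" | "i = 0" "j = 0" by blast
  then show "I \<in> {Idl\<^bsub>S\<^esub> {q1}, Idl\<^bsub>S\<^esub> {q2}}"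
  proof cases
    case 1
    then show ?thesis using contained[OF _ irreducible_q1 q1_dvd_f] by (simp add: genideal_q1)
  next
    case 2
    then show ?thesis using contained[OF _ irreducible_q2 q2_dvd_f] by (simp add: genideal_q2)
  next
    case 3
    then have "I = carrier S" using ij(3) poly_multiples_eq_carrier_iff[OF degree_f_pos] by simp
    then show ?thesis using I.I_notcarr by blast
  qed
next
  fix I assume "I \<in> {Idl\<^bsub>S\<^esub> {q1}, Idl\<^bsub>S\<^esub> {q2}}"
  then show "I \<in> {I. maximalideal I S}"
    using maximalideal_poly_multiples[OF degree_f_pos irreducible_q1 q1_dvd_f degree_q1_less]
      maximalideal_poly_multiples[OF degree_f_pos irreducible_q2 q2_dvd_f degree_q2_less]
    by (auto simp: genideal_q1 genideal_q2)
qed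

lemma coprime_f_iff: "coprime a f \<longleftrightarrow> \<not> q1 dvd a \<and> \<not> q2 dvd a"
proof
  assume "coprime a f"
  then show "\<not> q1 dvd a \<and> \<not> q2 dvd a"
    using q1_dvd_f q2_dvd_f irreducible_not_unit[OF irreducible_q1] irreducible_not_unit[OF irreducible_q2]
    by (auto simp: coprime_def)
next
  assume a: "\<not> q1 dvd a \<and> \<not> q2 dvd a"
  show "coprime a f"
  proof (rule coprimeI)
    fix c assume "c dvd a" "c dvd f"
    then obtain u i j where c: "is_unit u" "c = u * (q1 ^ i * q2 ^ j)" by (blast elim: dvd_fE)
    have "i = 0"
    proof (rule ccontr)
      assume "i \<noteq> 0"
      then have "q1 dvd c" unfolding c(2) by (intro dvd_mult dvd_mult2 dvd_power) simp
      then show False using a \<open>c dvd a\<close> dvd_trans by blast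
    qed
    moreover have "j = 0"
    proof (rule ccontr)
      assume "j \<noteq> 0"
      then have "q2 dvd c" unfolding c(2) by (intro dvd_mult dvd_power) simp
      then show False using a \<open>c dvd a\<close> dvd_trans by blast
    qed
    ultimately show "is_unit c" using c by simp
  qed
qed

lemma nonunits_quot: "carrier S - Units S = Idl\<^bsub>S\<^esub> {q1} \<union> Idl\<^bsub>S\<^esub> {q2}"
proof -
  have "carrier S - Units S = {a \<in> carrier S. q1 dvd a \<or> q2 dvd a}"
    by (auto simp: Units_quot_poly_ring[OF degree_f_pos] coprime_f_iff)
  also have "\<dots> = poly_multiples f q1 \<union> poly_multiples f q2"
    by (auto simp: poly_multiples_def quot_poly_ring_simps_f)
  finally show ?thesis by (simp add: genideal_q1 genideal_q2)
qed

lemma nilpotents_quot: "nilpotents S = Idl\<^bsub>S\<^esub> {(q1 * q2) mod f}"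
proof -
  have "a \<in> nilpotents S \<longleftrightarrow> a \<in> poly_multiples f (q1 * q2)" if "a \<in> carrier S" for a
  proof
    assume "a \<in> nilpotents S"
    then obtain k where "f dvd a ^ k" by (auto simp: nilpotents_def nat_pow_quot_poly_ring[OF degree_f_pos] quot_poly_ring_simps_f)
    then have "q1 dvd a" "q2 dvd a"
      using q1_dvd_f q2_dvd_f prime_elem_q1 prime_elem_q2 by (meson dvd_trans prime_elem_dvd_power)+
    from \<open>q1 dvd a\<close> obtain b where b: "a = q1 * b" by (rule dvdE)
    with \<open>q2 dvd a\<close> have "q2 dvd b" using prime_elem_dvd_multD[OF prime_elem_q2] not_dvd_q2_q1 by blast
    then show "a \<in> poly_multiples f (q1 * q2)"
      using that b by (simp add: poly_multiples_def quot_poly_ring_simps_f)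
  next
    assume "a \<in> poly_multiples f (q1 * q2)"
    then obtain b where "a = q1 * q2 * b" by (auto simp: poly_multiples_def elim: dvdE)
    then have "a ^ n = f * b ^ n" by (simp add: f_eq power_mult_distrib)
    then show "a \<in> nilpotents S"
      using that by (auto simp: nilpotents_def nat_pow_quot_poly_ring[OF degree_f_pos] quot_poly_ring_simps_f
          intro!: exI[of _ n])
  qed
  moreover have "nilpotents S \<subseteq> carrier S" "poly_multiples f (q1 * q2) \<subseteq> carrier S"
    by (auto simp: nilpotents_def poly_multiples_def quot_poly_ring_simps_f)
  ultimately have "nilpotents S = poly_multiples f (q1 * q2)" by blast
  then show ?thesis
    using genideal_eq_poly_multiples[OF degree_f_pos power_product_dvd_f[of 1 1]] n_pos by simp
qed

lemma card_genideal_power_product: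
  assumes "finite (UNIV :: 'a set)" "i \<le> n" "j \<le> n"
  shows "card (Idl\<^bsub>S\<^esub> {q1 [^]\<^bsub>S\<^esub> i \<otimes>\<^bsub>S\<^esub> q2 [^]\<^bsub>S\<^esub> j})
    = card (UNIV :: 'a set) ^ (degree f - i * degree q1 - j * degree q2)"
proof -
  have "q1 \<noteq> 0" "q2 \<noteq> 0" using degree_q1_pos degree_q2_pos by auto
  then have "degree (q1 ^ i * q2 ^ j) = i * degree q1 + j * degree q2"
    by (simp add: degree_mult_eq degree_power_eq)
  then show ?thesis
    using genideal_power_product[OF assms(2,3)]
      card_poly_multiples[OF assms(1) power_product_dvd_f[OF assms(2,3)] degree_f_pos]
    by simp
qed

end

section \<open>Polynomials over finite fields\<close>

lemma linear_poly_has_root: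
  fixes p :: "'a::field poly"
  assumes "degree p = 1"
  obtains x where "poly p x = 0"
proof -
  obtain a b where "p = [:b, a:]" "a \<noteq> 0" using assms by (rule degree1_coeffs)
  then show thesis by (intro that[of "- b / a"]) simp
qed

lemma irreducible_if_no_roots:
  fixes q :: "'a::field poly"
  assumes "degree q \<in> {2, 3}" and no_root: "\<And>x. poly q x \<noteq> 0"
  shows "irreducible q"
proof (rule irreducibleI)
  show "q \<noteq> 0" using assms(1) by auto
  then show "\<not> q dvd 1" using assms(1) by (auto simp: is_unit_iff_degree)
  fix a b assume q: "q = a * b"
  then have "a \<noteq> 0" "b \<noteq> 0" using \<open>q \<noteq> 0\<close> by auto
  then have deg: "degree a + degree b \<in> {2, 3}" using assms(1) q by (simp add: degree_mult_eq)
  have "degree a \<noteq> 1 \<and> degree b \<noteq> 1"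
  proof (rule ccontr)
    assume "\<not> ?thesis"
    then obtain x where "poly a x = 0 \<or> poly b x = 0" by (metis linear_poly_has_root)
    then show False using no_root[of x] q by auto
  qed
  with deg have "degree a = 0 \<or> degree b = 0" by auto
  then show "a dvd 1 \<or> b dvd 1" using \<open>a \<noteq> 0\<close> \<open>b \<noteq> 0\<close> by (auto simp: is_unit_iff_degree)
qed

lemma monom_minus_const_power_CHAR:
  fixes c :: "'a::field"
  assumes "prime CHAR('a)" "odd CHAR('a)"
  shows "(monom 1 k - [:c:]) ^ (CHAR('a) ^ s) = monom 1 (k * CHAR('a) ^ s) - [:c ^ (CHAR('a) ^ s):]"
proof -
  have "(monom 1 k + - [:c:]) ^ (CHAR('a) ^ s) = monom 1 k ^ (CHAR('a) ^ s) + (- [:c:]) ^ (CHAR('a) ^ s)"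
    by (rule freshmans_dream') (simp_all add: assms(1))
  then show ?thesis using assms(2) by (simp add: monom_power poly_const_pow diff_conv_add_uminus)
qed

lemma CHAR_dvd_card_UNIV: "CHAR('a::{ring_1,finite}) dvd card (UNIV :: 'a set)"
proof -
  have "(\<Sum>x\<in>(UNIV :: 'a set). x + 1) = (\<Sum>x\<in>UNIV. x)"
    by (rule sum.reindex_bij_witness[of _ "\<lambda>x. x - 1" "\<lambda>x. x + 1"]) auto
  then have "of_nat (card (UNIV :: 'a set)) = (0 :: 'a)" by (simp add: sum.distrib)
  then show ?thesis by (simp add: of_nat_eq_0_iff_char_dvd)
qed

lemma power_card_UNIV_field: "(x :: 'a::{field,finite}) ^ card (UNIV :: 'a set) = x"
proof (cases "x = 0")
  case False
  let ?q = "card (UNIV :: 'a set)"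
  have "(\<Prod>y\<in>UNIV - {0}. x * y) = (\<Prod>y\<in>UNIV - {0}. y :: 'a)"
    by (rule prod.reindex_bij_witness[of _ "\<lambda>y. y / x" "\<lambda>y. x * y"]) (use False in auto)
  moreover have "(\<Prod>y\<in>UNIV - {0}. x * y) = x ^ (?q - 1) * (\<Prod>y\<in>UNIV - {0}. y)"
    by (simp add: prod.distrib card_Diff_singleton)
  moreover have "(\<Prod>y\<in>UNIV - {0}. y :: 'a) \<noteq> 0" by simp
  ultimately have "x ^ (?q - 1) = 1" by simp
  moreover have "?q = Suc (?q - 1)" using finite_UNIV_card_ge_0[where 'a = 'a] by simp
  ultimately show ?thesis by (metis mult.right_neutral power_Suc)
qed (simp add: finite_UNIV_card_ge_0)

lemma two_neq_zero_if_odd_card: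
  assumes "odd (card (UNIV :: 'a::{field,finite} set))"
  shows "(2 :: 'a) \<noteq> 0"
proof
  assume "(2 :: 'a) = 0"
  then have "CHAR('a) dvd 2" using of_nat_eq_0_iff_char_dvd[where 'a = 'a, of 2] by simp
  then have "CHAR('a) = 2" using CHAR_not_1'[where 'a = 'a] two_is_prime_nat by (auto simp: prime_nat_iff)
  then show False using CHAR_dvd_card_UNIV[where 'a = 'a] assms by simp
qed

lemma minus_one_not_square_finite_field:
  assumes "card (UNIV :: 'a::{field,finite} set) mod 4 = 3"
  shows "t ^ 2 \<noteq> (- 1 :: 'a)"
proof
  assume t: "t ^ 2 = -1"
  define k where "k = card (UNIV :: 'a set) div 4"
  have k: "card (UNIV :: 'a set) = 2 * (2 * k + 1) + 1"
    using div_mult_mod_eq[of "card (UNIV :: 'a set)" 4] assms unfolding k_def by simp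
  have "t = (t ^ 2) ^ (2 * k + 1) * t"
    using power_card_UNIV_field[of t] by (simp only: k power_add power_mult power_one_right)
  also have "\<dots> = - t" using t by simp
  finally have "2 * t = 0" by simp
  moreover have "(2 :: 'a) \<noteq> 0" using k by (intro two_neq_zero_if_odd_card) simp
  ultimately show False using t by simp
qed

lemma CHAR_eq_if_card_prime_power:
  assumes "prime p" "card (UNIV :: 'a::{field,finite} set) = p ^ m"
  shows "CHAR('a) = p"
proof -
  have "prime CHAR('a)" by (rule prime_CHAR_semidom) (simp add: finite_imp_CHAR_pos)
  moreover have "CHAR('a) dvd p ^ m" using CHAR_dvd_card_UNIV[where 'a = 'a] assms(2) by simp
  ultimately have "CHAR('a) dvd p" by (rule prime_dvd_power)
  then show ?thesis using \<open>prime CHAR('a)\<close> assms(1) by (simp add: primes_dvd_imp_eq)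
qed

lemma irreducible_quadratic:
  fixes c :: "'a::field"
  assumes "(2::'a) \<noteq> 0" "c \<noteq> 0" "\<And>t::'a. t ^ 2 \<noteq> -1"
  shows "irreducible [:c ^ 2 / 2, c, 1:]"
proof (rule irreducible_if_no_roots)
  fix x
  show "poly [:c ^ 2 / 2, c, 1:] x \<noteq> 0"
  proof
    assume "poly [:c ^ 2 / 2, c, 1:] x = 0"
    moreover have "(2 * x + c) ^ 2 = 4 * poly [:c ^ 2 / 2, c, 1:] x - c ^ 2"
      using assms(1) by (simp add: field_simps power2_eq_square)
    ultimately have "(2 * x + c) ^ 2 = - (c ^ 2)" by simp
    then have "((2 * x + c) / c) ^ 2 = -1" using assms(2) by (simp add: power_divide)
    then show False using assms(3) by blast
  qed
qed simp

lemma quadratic_not_dvd_reflection: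
  fixes a c :: "'a::field"
  assumes "(2::'a) \<noteq> 0" "c \<noteq> 0"
  shows "\<not> [:a, c, 1:] dvd [:a, - c, 1:]"
proof
  assume "[:a, c, 1:] dvd [:a, - c, 1:]"
  moreover have "[:a, c, 1:] - [:a, - c, 1:] = [:0, 2 * c:]" by simp
  ultimately have "[:a, c, 1:] dvd [:0, 2 * c:]" by (metis dvd_diff dvd_refl)
  then show False using assms dvd_imp_degree_le[of "[:a, c, 1:]"] by fastforce
qed

lemma quadratic_factorization:
  fixes \<gamma> \<alpha>0 :: "'a::field"
  assumes "(2::'a) \<noteq> 0" "\<gamma> ^ 4 + 4 * \<alpha>0 = 0"
  shows "[:\<gamma> ^ 2 / 2, \<gamma>, 1:] * [:\<gamma> ^ 2 / 2, - \<gamma>, 1:] = [:- \<alpha>0, 0, 0, 0, 1:]"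
proof -
  have "(4::'a) \<noteq> 0" using assms(1) by (metis mult_eq_0_iff numeral_Bit0_eq_double)
  then have "\<alpha>0 = - (\<gamma> ^ 4 / 4)" using assms(2) by (simp add: field_simps add_eq_0_iff)
  then show ?thesis using assms(1) by (simp add: field_simps power2_eq_square power4_eq_xxxx)
qed

lemma quartic_eq_monom: "[:- c, 0, 0, 0, 1:] = monom 1 4 - [:c :: 'a::comm_ring_1:]"
  by (simp add: monom_Suc numeral_eq_Suc monom_0)

lemma two_prime_power_quotient_finite_field:
  fixes \<alpha> \<alpha>0 \<gamma> :: "'a::{field, finite}"
  assumes "prime p" "odd p" "card (UNIV :: 'a set) = p ^ m" "p ^ m mod 4 = 3"
    and "\<alpha> \<noteq> 0" "\<alpha>0 ^ (p ^ s) = \<alpha>" "\<gamma> ^ 4 + 4 * \<alpha>0 = 0"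
  shows "two_prime_power_quotient (monom 1 (4 * p ^ s) - [:\<alpha>:])
           [:\<gamma> ^ 2 / 2, \<gamma>, 1:] [:\<gamma> ^ 2 / 2, - \<gamma>, 1:] (p ^ s)"
proof
  have two: "(2::'a) \<noteq> 0" using assms(2,3) by (intro two_neq_zero_if_odd_card) simp
  have "\<gamma> \<noteq> 0"
  proof
    assume "\<gamma> = 0"
    moreover have "(4::'a) \<noteq> 0" using two by (metis mult_eq_0_iff numeral_Bit0_eq_double)
    ultimately have "\<alpha>0 = 0" using assms(7) by simp
    then show False using assms(5,6) prime_gt_0_nat[OF assms(1)] by (simp add: power_0_left)
  qed
  have no_sqrt: "t ^ 2 \<noteq> -1" for t :: 'a
    using assms(3,4) by (intro minus_one_not_square_finite_field) simp
  show "irreducible [:\<gamma> ^ 2 / 2, \<gamma>, 1:]" using two \<open>\<gamma> \<noteq> 0\<close> no_sqrt by (rule irreducible_quadratic)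
  show "irreducible [:\<gamma> ^ 2 / 2, - \<gamma>, 1:]"
    using irreducible_quadratic[OF two _ no_sqrt, of "- \<gamma>"] \<open>\<gamma> \<noteq> 0\<close> by simp
  show "\<not> [:\<gamma> ^ 2 / 2, \<gamma>, 1:] dvd [:\<gamma> ^ 2 / 2, - \<gamma>, 1:]"
    using two \<open>\<gamma> \<noteq> 0\<close> by (rule quadratic_not_dvd_reflection)
  show "p ^ s > 0" using assms(1) by (simp add: prime_gt_0_nat)
  have "CHAR('a) = p" using assms(1,3) by (rule CHAR_eq_if_card_prime_power)
  then show "monom 1 (4 * p ^ s) - [:\<alpha>:] = ([:\<gamma> ^ 2 / 2, \<gamma>, 1:] * [:\<gamma> ^ 2 / 2, - \<gamma>, 1:]) ^ p ^ s"
    unfolding quadratic_factorization[OF two assms(7)] quartic_eq_monom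
    using monom_minus_const_power_CHAR[where c = \<alpha>0 and k = 4 and s = s] assms(1,2,6) by simp
qed

theorem proposition3p4:
  fixes p m s :: nat and \<alpha> \<alpha>0 \<gamma> :: "'a::{field, finite}"
  assumes "prime p" and "odd p" and "m > 0" and "s > 0"
    and "card (UNIV :: 'a set) = p ^ m" and "(p ^ m) mod 4 = 3"
    and "\<alpha> \<noteq> 0" and "\<not> (\<exists>b. b ^ 2 = \<alpha>)"
    and "\<alpha>0 ^ (p ^ s) = \<alpha>"
    and "\<gamma> ^ 4 + 4 * \<alpha>0 = 0"
  defines "S \<equiv> quot_poly_ring (monom 1 (4 * p ^ s) - [:\<alpha>:])"
    and "g1 \<equiv> [:\<gamma>\<^sup>2 / 2, \<gamma>, 1:]"
    and "g2 \<equiv> [:\<gamma>\<^sup>2 / 2, - \<gamma>, 1:]"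
  shows "{I. maximalideal I S} = {Idl\<^bsub>S\<^esub> {g1}, Idl\<^bsub>S\<^esub> {g2}}
         \<and> Idl\<^bsub>S\<^esub> {g1} \<noteq> Idl\<^bsub>S\<^esub> {g2}
         \<and> {I. ideal I S} = {Idl\<^bsub>S\<^esub> {g1 [^]\<^bsub>S\<^esub> i \<otimes>\<^bsub>S\<^esub> g2 [^]\<^bsub>S\<^esub> j} | i j.
                                  i \<le> p ^ s \<and> j \<le> p ^ s}
         \<and> (\<forall>i j. i \<le> p ^ s \<longrightarrow> j \<le> p ^ s \<longrightarrow>
              card (Idl\<^bsub>S\<^esub> {g1 [^]\<^bsub>S\<^esub> i \<otimes>\<^bsub>S\<^esub> g2 [^]\<^bsub>S\<^esub> j})
                = p ^ (m * (4 * p ^ s - 2 * i - 2 * j)))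
         \<and> nilpotents S = Idl\<^bsub>S\<^esub> {[:- \<alpha>0, 0, 0, 0, 1:]}
         \<and> carrier S - Units S = Idl\<^bsub>S\<^esub> {g1} \<union> Idl\<^bsub>S\<^esub> {g2}"
proof -
  interpret Q: two_prime_power_quotient "monom 1 (4 * p ^ s) - [:\<alpha>:]" g1 g2 "p ^ s"
    unfolding g1_def g2_def using assms(1,2,5,6,7,9,10) by (rule two_prime_power_quotient_finite_field)
  have "degree g1 = 2" "degree g2 = 2" by (simp_all add: g1_def g2_def)
  moreover have "p ^ s > 1" using prime_gt_1_nat[OF assms(1)] assms(4) by (rule one_less_power)
  ultimately have degrees: "degree (monom 1 (4 * p ^ s) - [:\<alpha>:] :: 'a poly) = 4 * p ^ s"
    "degree (g1 * g2) < 4 * p ^ s"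
    using Q.degree_f degree_mult_le[of g1 g2] by simp_all
  have "(2::'a) \<noteq> 0" using assms(2,5) by (intro two_neq_zero_if_odd_card) simp
  then have "g1 * g2 = [:- \<alpha>0, 0, 0, 0, 1:]"
    unfolding g1_def g2_def using assms(10) by (rule quadratic_factorization)
  then have "(g1 * g2) mod (monom 1 (4 * p ^ s) - [:\<alpha>:]) = [:- \<alpha>0, 0, 0, 0, 1:]"
    using degrees by (simp add: mod_poly_less)
  moreover have "card (Idl\<^bsub>S\<^esub> {g1 [^]\<^bsub>S\<^esub> i \<otimes>\<^bsub>S\<^esub> g2 [^]\<^bsub>S\<^esub> j}) = p ^ (m * (4 * p ^ s - 2 * i - 2 * j))"
    if "i \<le> p ^ s" "j \<le> p ^ s" for i j
    using Q.card_genideal_power_product[OF _ that] degrees \<open>degree g1 = 2\<close> \<open>degree g2 = 2\<close> assms(5)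
    by (simp add: S_def power_mult mult.commute)
  ultimately show ?thesis
    using Q.maximalideals_quot Q.genideal_q1_neq_q2 Q.ideals_quot Q.nilpotents_quot Q.nonunits_quot
    by (simp add: S_def)
qed

end
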